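(* Let $t$ be a node of the ontology tree and let $O_i,O_j$ be objects all of whose terms lie in the subtree rooted at $t$. Suppose each of $O_i$ and $O_j$ has multiple span at $t$, i.e. for each of the two objects there are at least two distinct children of $t$ whose subtrees contain a term of that object. Let $n_i=|O_i|$, $n_j=|O_j|$, $w_i=\sum_{a\in O_i} d(a,t)$ and $w_j=\sum_{b\in O_j} d(b,t)$. Then $$d_{avg}(O_i,O_j)\ \ge\ \frac{w_i+w_j}{n_i\,n_j}.$$
   Context: An ontology is a finite rooted tree whose nodes are called terms; each edge carries a nonnegative weight. The distance $d(t_i,t_j)$ between two terms is the sum of the edge weights along the unique path between them. An object is a nonempty finite set of terms; $|O|$ is its number of terms. The average pairwise distance is $d_{avg}(X,Y)=\frac{1}{|X|\,|Y|}\sum_{x\in X,\,y\in Y} d(x,y)$. The span of an object at node $t$ is the number of child subtrees of $t$ containing at least one of its terms; it is single if this number is 1 and multiple if it is at least 2. *)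

theory Defs
  imports Complex_Main
begin

text \<open>Each non-root node c carries the weight w c of
  the edge between c and its parent par c.\<close>

definition ontology :: "'a set \<Rightarrow> 'a \<Rightarrow> ('a \<Rightarrow> 'a) \<Rightarrow> ('a \<Rightarrow> real) \<Rightarrow> bool" where
  "ontology V r par w \<longleftrightarrow> finite V \<and> r \<in> V \<and> par r = r \<and>
     (\<forall>x\<in>V. par x \<in> V) \<and> (\<forall>x\<in>V. \<exists>k. (par ^^ k) x = r) \<and>
     (\<forall>x\<in>V. w x \<ge> 0)"

definition anc :: "('a \<Rightarrow> 'a) \<Rightarrow> 'a \<Rightarrow> 'a set" where
  "anc par x = {(par ^^ k) x | k. True}"

text \<open>Edges on the path from x up to the root r, each edge identified by its lower
  (child) endpoint.\<close>
definition up_edges :: "'a \<Rightarrow> ('a \<Rightarrow> 'a) \<Rightarrow> 'a \<Rightarrow> 'a set" where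
  "up_edges r par x = anc par x - {r}"

text \<open>Distance: sum of the weights of the edges on the unique path between x and y,
  whose edge set is the symmetric difference of the two root paths.\<close>
definition tdist :: "'a \<Rightarrow> ('a \<Rightarrow> 'a) \<Rightarrow> ('a \<Rightarrow> real) \<Rightarrow> 'a \<Rightarrow> 'a \<Rightarrow> real" where
  "tdist r par w x y =
     sum w ((up_edges r par x - up_edges r par y) \<union> (up_edges r par y - up_edges r par x))"

definition subtree :: "'a set \<Rightarrow> ('a \<Rightarrow> 'a) \<Rightarrow> 'a \<Rightarrow> 'a set" where
  "subtree V par t = {x \<in> V. t \<in> anc par x}"

definition children :: "'a set \<Rightarrow> 'a \<Rightarrow> ('a \<Rightarrow> 'a) \<Rightarrow> 'a \<Rightarrow> 'a set" where
  "children V r par t = {c \<in> V. c \<noteq> r \<and> par c = t}"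

definition span :: "'a set \<Rightarrow> 'a \<Rightarrow> ('a \<Rightarrow> 'a) \<Rightarrow> 'a \<Rightarrow> 'a set \<Rightarrow> nat" where
  "span V r par t Ob = card {c \<in> children V r par t. \<exists>x\<in>Ob. x \<in> subtree V par c}"

definition is_object :: "'a set \<Rightarrow> 'a set \<Rightarrow> bool" where
  "is_object V Ob \<longleftrightarrow> Ob \<subseteq> V \<and> finite Ob \<and> Ob \<noteq> {}"

definition davg :: "'a \<Rightarrow> ('a \<Rightarrow> 'a) \<Rightarrow> ('a \<Rightarrow> real) \<Rightarrow> 'a set \<Rightarrow> 'a set \<Rightarrow> real" where
  "davg r par w X Y =
     (\<Sum>x\<in>X. \<Sum>y\<in>Y. tdist r par w x y) / (real (card X) * real (card Y))"

end

theory Submission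
  imports Defs
begin

(* For a node x of the subtree at t let the branch of x be the set of edges
   on the path from x up to t, and D(x) = d(x,t) its weight.  For x, y below t the path
   between them is the symmetric difference of their branches, so
       d(x,y) = D(x) + D(y) - 2 m(x,y),     m(x,y) = weight of (branch x \<inter> branch y),
   with 0 \<le> m(x,y) \<le> min (D x) (D y).  Multiple span of O_j at t means that O_j meets
   two different child subtrees of t; x lies in at most one of them, so some y \<in> O_j has
   a branch disjoint from that of x, i.e. m(x,y) = 0.  Hence each row sum of m is at most
   (n_j - 1) D(x), and symmetrically each column sum at most (n_i - 1) D(y); bounding
   2 \<Sigma>m by the sum of these two estimates gives \<Sigma>\<Sigma> d(x,y) \<ge> \<Sigma> D(x) + \<Sigma> D(y). *)

lemma anc_self: "x \<in> anc par x"
  unfolding anc_def by (auto intro: exI[of _ 0])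

lemma anc_trans:
  assumes "a \<in> anc par b" "b \<in> anc par x" shows "a \<in> anc par x"
proof -
  obtain i j where "a = (par ^^ i) b" "b = (par ^^ j) x"
    using assms by (auto simp: anc_def)
  then have "a = (par ^^ (i + j)) x" by (simp add: funpow_add)
  then show ?thesis by (auto simp: anc_def)
qed

lemma anc_chain:
  assumes "a \<in> anc par x" "b \<in> anc par x" shows "a \<in> anc par b \<or> b \<in> anc par a"
proof -
  obtain i j where i: "a = (par ^^ i) x" and j: "b = (par ^^ j) x"
    using assms by (auto simp: anc_def)
  have "a = (par ^^ (i - j)) b" if "j \<le> i"
    using i j that by (metis funpow_add le_add_diff_inverse2 comp_apply)
  moreover have "b = (par ^^ (j - i)) a" if "i \<le> j"
    using i j that by (metis funpow_add le_add_diff_inverse2 comp_apply)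
  ultimately show ?thesis using nat_le_linear[of i j] by (auto simp: anc_def)
qed

lemma anc_par: "anc par c = insert c (anc par (par c))"
  unfolding anc_def
proof (intro equalityI subsetI)
  fix z assume "z \<in> {(par ^^ k) c |k. True}"
  then obtain k where "z = (par ^^ k) c" by blast
  then show "z \<in> insert c {(par ^^ k) (par c) |k. True}"
    by (cases k) (auto simp del: funpow.simps simp: funpow_Suc_right)
next
  fix z assume "z \<in> insert c {(par ^^ k) (par c) |k. True}"
  then show "z \<in> {(par ^^ k) c |k. True}"
    by (auto intro: exI[of _ 0]) (metis comp_apply funpow_Suc_right)
qed

lemma funpow_periodic: "(f ^^ p) x = x \<Longrightarrow> (f ^^ (n * p)) x = x"
  by (induction n) (simp_all add: funpow_add)

lemma ontology_funpow_in_V: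
  assumes "ontology V r par w" "x \<in> V" shows "(par ^^ k) x \<in> V"
  using assms by (induction k) (auto simp: ontology_def)

lemma ontology_finite_anc:
  assumes "ontology V r par w" "x \<in> V" shows "anc par x \<subseteq> V" "finite (anc par x)"
proof -
  show sub: "anc par x \<subseteq> V"
    using ontology_funpow_in_V[OF assms] by (auto simp: anc_def)
  show "finite (anc par x)"
    using finite_subset[OF sub] assms(1) by (simp add: ontology_def)
qed

text \<open>Acyclicity: since every node reaches the fixed point r, a non-root node is never
  a proper ancestor of itself.\<close>
lemma ontology_acyclic:
  assumes ont: "ontology V r par w" and c: "c \<in> V" "c \<noteq> r"
  shows "c \<notin> anc par (par c)"
proof
  assume "c \<in> anc par (par c)"
  then obtain k where "c = (par ^^ k) (par c)" by (auto simp: anc_def)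
  then have period: "(par ^^ Suc k) c = c" by (metis comp_apply funpow_Suc_right)
  obtain K where K: "(par ^^ K) c = r" using ont c by (auto simp: ontology_def)
  have r_fixed: "(par ^^ j) r = r" for j using ont by (induction j) (auto simp: ontology_def)
  have "K \<le> K * Suc k" by simp
  then have "(par ^^ (K * Suc k)) c = (par ^^ (K * Suc k - K)) ((par ^^ K) c)"
    by (metis funpow_add comp_apply le_add_diff_inverse2)
  also have "\<dots> = r" using K r_fixed by simp
  finally show False using funpow_periodic[OF period, of K] c by simp
qed

lemma ontology_child_ancestor_unique:
  assumes ont: "ontology V r par w"
    and c1: "c1 \<in> children V r par t" "c1 \<in> anc par x"
    and c2: "c2 \<in> children V r par t" "c2 \<in> anc par x"
  shows "c1 = c2"
proof (rule ccontr)
  assume ne: "c1 \<noteq> c2"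
  have p1: "par c1 = t" "c1 \<in> V" "c1 \<noteq> r" and p2: "par c2 = t" "c2 \<in> V" "c2 \<noteq> r"
    using c1 c2 by (auto simp: children_def)
  from anc_chain[OF c1(2) c2(2)] show False
  proof
    assume "c1 \<in> anc par c2"
    then have "c1 \<in> anc par (par c1)" using anc_par[of par c2] p1 p2 ne by auto
    then show False using ontology_acyclic[OF ont p1(2,3)] by blast
  next
    assume "c2 \<in> anc par c1"
    then have "c2 \<in> anc par (par c2)" using anc_par[of par c1] p1 p2 ne by auto
    then show False using ontology_acyclic[OF ont p2(2,3)] by blast
  qed
qed

lemma sum_sym_diff:
  fixes f :: "'a \<Rightarrow> 'b::comm_ring_1"
  assumes "finite A" "finite B"
  shows "sum f ((A - B) \<union> (B - A)) = sum f A + sum f B - 2 * sum f (A \<inter> B)"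
proof -
  have "sum f ((A - B) \<union> (B - A)) = sum f (A - B) + sum f (B - A)"
    by (rule sum.union_disjoint) (use assms in auto)
  moreover have "sum f A = sum f (A \<inter> B) + sum f (A - B)"
    using assms by (simp add: sum.Int_Diff)
  moreover have "sum f B = sum f (A \<inter> B) + sum f (B - A)"
    using assms sum.Int_Diff[of B f A] by (simp add: Int_commute)
  ultimately show ?thesis by (simp add: algebra_simps)
qed

definition branch :: "'a \<Rightarrow> ('a \<Rightarrow> 'a) \<Rightarrow> 'a \<Rightarrow> 'a \<Rightarrow> 'a set" where
  "branch r par t x = up_edges r par x - up_edges r par t"

lemma up_edges_mono_subtree:
  "x \<in> subtree V par t \<Longrightarrow> up_edges r par t \<subseteq> up_edges r par x"
  unfolding subtree_def up_edges_def by (auto intro: anc_trans)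

lemma tdist_to_subtree_root:
  assumes "x \<in> subtree V par t"
  shows "tdist r par w x t = sum w (branch r par t x)"
proof -
  have "up_edges r par t - up_edges r par x = {}"
    using up_edges_mono_subtree[OF assms] by blast
  then show ?thesis unfolding tdist_def branch_def by (simp only: Un_empty_right)
qed

lemma tdist_in_subtree:
  assumes ont: "ontology V r par w"
    and x: "x \<in> subtree V par t" and y: "y \<in> subtree V par t"
  shows "tdist r par w x y = sum w (branch r par t x) + sum w (branch r par t y)
           - 2 * sum w (branch r par t x \<inter> branch r par t y)"
proof -
  have "x \<in> V" "y \<in> V" using x y by (auto simp: subtree_def)
  then have "finite (branch r par t x)" "finite (branch r par t y)"
    using ontology_finite_anc[OF ont] by (auto simp: branch_def up_edges_def)
  moreover have "up_edges r par x - up_edges r par y = branch r par t x - branch r par t y"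
    and "up_edges r par y - up_edges r par x = branch r par t y - branch r par t x"
    using up_edges_mono_subtree[OF x] up_edges_mono_subtree[OF y]
    by (auto simp: branch_def)
  ultimately show ?thesis unfolding tdist_def by (simp add: sum_sym_diff)
qed

text \<open>Weights are nonnegative, so a part of a branch weighs at most the whole branch.\<close>
lemma branch_part_le:
  assumes ont: "ontology V r par w" and x: "x \<in> V"
  shows "sum w (branch r par t x \<inter> B) \<le> sum w (branch r par t x)"
proof (rule sum_mono2)
  show "finite (branch r par t x)"
    using ontology_finite_anc[OF ont x] by (simp add: branch_def up_edges_def)
  show "\<And>b. b \<in> branch r par t x - branch r par t x \<inter> B \<Longrightarrow> 0 \<le> w b"
    using ontology_finite_anc[OF ont x] ont
    by (auto simp: branch_def up_edges_def ontology_def)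
qed auto

lemma branch_disjoint:
  assumes c: "c \<in> children V r par t" and cy: "c \<in> anc par y" and cx: "c \<notin> anc par x"
  shows "branch r par t x \<inter> branch r par t y = {}"
proof (rule ccontr)
  assume "branch r par t x \<inter> branch r par t y \<noteq> {}"
  then obtain z where zx: "z \<in> anc par x" and zy: "z \<in> anc par y" and zt: "z \<notin> anc par t"
    by (auto simp: branch_def up_edges_def)
  have "par c = t" using c by (auto simp: children_def)
  from anc_chain[OF zy cy] show False
  proof
    assume "z \<in> anc par c"
    then have "z = c \<or> z \<in> anc par t" using anc_par[of par c] \<open>par c = t\<close> by auto
    then show False using zt zx cx by auto
  next
    assume "c \<in> anc par z"
    then show False using anc_trans[OF _ zx] cx by blast
  qed
qed

lemma multiple_span_disjoint_branch:
  assumes ont: "ontology V r par w" and span: "span V r par t Ob \<ge> 2"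
  shows "\<exists>y\<in>Ob. branch r par t x \<inter> branch r par t y = {}"
proof -
  let ?C = "{c \<in> children V r par t. \<exists>y\<in>Ob. y \<in> subtree V par c}"
  have "card ?C \<ge> 2" using span by (simp add: span_def)
  then have "finite ?C" "\<not> card ?C \<le> Suc 0" by (auto intro: card_ge_0_finite)
  then obtain c1 c2 where "c1 \<in> ?C" "c2 \<in> ?C" "c1 \<noteq> c2"
    by (auto simp: card_le_Suc0_iff_eq)
  then obtain y1 y2 where c1: "c1 \<in> children V r par t" "y1 \<in> Ob" "c1 \<in> anc par y1"
    and c2: "c2 \<in> children V r par t" "y2 \<in> Ob" "c2 \<in> anc par y2" and "c1 \<noteq> c2"
    by (auto simp: subtree_def)
  then have "c1 \<notin> anc par x \<or> c2 \<notin> anc par x"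
    using ontology_child_ancestor_unique[OF ont] by blast
  then show ?thesis
    using branch_disjoint[OF c1(1,3), of x] branch_disjoint[OF c2(1,3), of x] c1(2) c2(2)
    by blast
qed

lemma sum_le_with_zero_term:
  fixes g :: "'b \<Rightarrow> real"
  assumes "finite Y" "y0 \<in> Y" "g y0 = 0" "\<And>y. y \<in> Y \<Longrightarrow> g y \<le> c"
  shows "sum g Y \<le> (real (card Y) - 1) * c"
proof -
  have "sum g Y = g y0 + sum g (Y - {y0})" using assms(1,2) by (rule sum.remove)
  also have "\<dots> \<le> real (card (Y - {y0})) * c"
    using assms(3) sum_bounded_above[of "Y - {y0}" g c] assms(4) by simp
  also have "card Y > 0" using assms(1,2) card_gt_0_iff by blast
  then have "real (card (Y - {y0})) = real (card Y) - 1"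
    using assms(1,2) by (simp add: of_nat_diff)
  finally show ?thesis .
qed

lemma double_sum_overlap_bound:
  fixes D :: "'a \<Rightarrow> real" and E :: "'b \<Rightarrow> real" and m :: "'a \<Rightarrow> 'b \<Rightarrow> real"
  assumes X: "finite X" and Y: "finite Y"
    and row_zero: "\<And>x. x \<in> X \<Longrightarrow> \<exists>y\<in>Y. m x y = 0"
    and col_zero: "\<And>y. y \<in> Y \<Longrightarrow> \<exists>x\<in>X. m x y = 0"
    and le_D: "\<And>x y. x \<in> X \<Longrightarrow> y \<in> Y \<Longrightarrow> m x y \<le> D x"
    and le_E: "\<And>x y. x \<in> X \<Longrightarrow> y \<in> Y \<Longrightarrow> m x y \<le> E y"
  shows "sum D X + sum E Y \<le> (\<Sum>x\<in>X. \<Sum>y\<in>Y. D x + E y - 2 * m x y)"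
proof -
  let ?M = "\<Sum>x\<in>X. \<Sum>y\<in>Y. m x y"
  have rows: "?M \<le> (real (card Y) - 1) * sum D X"
  proof -
    have "?M \<le> (\<Sum>x\<in>X. (real (card Y) - 1) * D x)"
      using row_zero le_D by (intro sum_mono) (metis Y sum_le_with_zero_term)
    then show ?thesis by (simp add: sum_distrib_left)
  qed
  have cols: "?M \<le> (real (card X) - 1) * sum E Y"
  proof -
    have "?M = (\<Sum>y\<in>Y. \<Sum>x\<in>X. m x y)" by (rule sum.swap)
    also have "\<dots> \<le> (\<Sum>y\<in>Y. (real (card X) - 1) * E y)"
      using col_zero le_E by (intro sum_mono) (metis X sum_le_with_zero_term)
    finally show ?thesis by (simp add: sum_distrib_left)
  qed
  have "(\<Sum>x\<in>X. \<Sum>y\<in>Y. D x + E y - 2 * m x y)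
      = real (card Y) * sum D X + real (card X) * sum E Y - 2 * ?M"
    by (simp add: sum.distrib sum_subtractf sum_distrib_left sum_distrib_right
        sum.swap[of _ X Y] algebra_simps)
  then show ?thesis using rows cols by (simp add: algebra_simps)
qed

theorem mainTheorem4:
  fixes V :: "'a set" and r t :: 'a and par :: "'a \<Rightarrow> 'a" and w :: "'a \<Rightarrow> real"
    and Oi Oj :: "'a set"
  assumes "ontology V r par w"
    and "t \<in> V"
    and "is_object V Oi" and "is_object V Oj"
    and "Oi \<subseteq> subtree V par t" and "Oj \<subseteq> subtree V par t"
    and "span V r par t Oi \<ge> 2" and "span V r par t Oj \<ge> 2"
  shows "davg r par w Oi Oj \<ge>
     ((\<Sum>a\<in>Oi. tdist r par w a t) + (\<Sum>b\<in>Oj. tdist r par w b t))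
       / (real (card Oi) * real (card Oj))"
proof -
  note ont = assms(1)
  define D where "D x = tdist r par w x t" for x
  define m where "m x y = sum w (branch r par t x \<inter> branch r par t y)" for x y
  have below: "x \<in> subtree V par t" if "x \<in> Oi \<union> Oj" for x using that assms(5,6) by blast
  then have inV: "x \<in> V" if "x \<in> Oi \<union> Oj" for x using that by (auto simp: subtree_def)
  have dist: "tdist r par w x y = D x + D y - 2 * m x y" if "x \<in> Oi" "y \<in> Oj" for x y
    using tdist_in_subtree[OF ont below below] tdist_to_subtree_root[OF below] that
    by (simp add: D_def m_def)
  have "sum D Oi + sum D Oj \<le> (\<Sum>x\<in>Oi. \<Sum>y\<in>Oj. D x + D y - 2 * m x y)"
  proof (rule double_sum_overlap_bound)
    show "finite Oi" "finite Oj" using assms(3,4) by (auto simp: is_object_def)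
    show "\<exists>y\<in>Oj. m x y = 0" for x
      using multiple_span_disjoint_branch[OF ont assms(8), of x] unfolding m_def
      by (metis sum.empty)
    show "\<exists>x\<in>Oi. m x y = 0" for y
      using multiple_span_disjoint_branch[OF ont assms(7), of y] unfolding m_def
      by (metis Int_commute sum.empty)
    show "m x y \<le> D x" if "x \<in> Oi" "y \<in> Oj" for x y
      using branch_part_le[OF ont inV] tdist_to_subtree_root[OF below] that
      by (simp add: m_def D_def)
    show "m x y \<le> D y" if "x \<in> Oi" "y \<in> Oj" for x y
      using branch_part_le[OF ont inV] tdist_to_subtree_root[OF below] that
      by (simp add: m_def D_def Int_commute)
  qed
  also have "\<dots> = (\<Sum>x\<in>Oi. \<Sum>y\<in>Oj. tdist r par w x y)"
    using dist by simp
  moreover have "real (card Oi) * real (card Oj) > 0"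
    using assms(3,4) by (auto simp: is_object_def card_gt_0_iff)
  ultimately show ?thesis unfolding davg_def D_def by (simp add: divide_right_mono)
qed

end
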